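(* Let $K$ be a field and $P$, $Q$ arbitrary posets. If the $K$-algebras $FI(P)$ and $FI(Q)$ are isomorphic, then the posets $P$ and $Q$ are isomorphic.
   Context: $K$ is a field, $P$ an arbitrary poset. $I(P)$ is the set of functions $\alpha$ assigning to each pair $x\le y$ in $P$ a value $\alpha(x,y)\in K$. An element $\alpha\in I(P)$ is a finitary series if for all $x<y$ in $P$ there are only finitely many pairs $(u,v)$ with $x\le u<v\le y$ and $\alpha(u,v)\neq0$; $FI(P)$ is the set of finitary series. $FI(P)$ is an associative $K$-algebra under pointwise addition and convolution $(\alpha\beta)(x,y)=\sum_{x\le z\le y}\alpha(x,z)\beta(z,y)$. The same definitions apply to $Q$. *)

theory Defs
  imports Main
begin

text \<open>Elements of the incidence space I(P) over a poset P (a type of class order)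
  and a field K are represented as functions alpha :: P => P => K that vanish
  outside the pairs x <= y.\<close>

definition finitary :: "('a::order \<Rightarrow> 'a \<Rightarrow> 'k::field) \<Rightarrow> bool" where
  "finitary \<alpha> \<longleftrightarrow>
     (\<forall>x y. x < y \<longrightarrow>
        finite {(u, v). x \<le> u \<and> u < v \<and> v \<le> y \<and> \<alpha> u v \<noteq> 0})"

definition FI :: "('a::order \<Rightarrow> 'a \<Rightarrow> 'k::field) set" where
  "FI = {\<alpha>. (\<forall>x y. \<not> x \<le> y \<longrightarrow> \<alpha> x y = 0) \<and> finitary \<alpha>}"

definition fi_add :: "('a::order \<Rightarrow> 'a \<Rightarrow> 'k::field) \<Rightarrow> ('a \<Rightarrow> 'a \<Rightarrow> 'k) \<Rightarrow> ('a \<Rightarrow> 'a \<Rightarrow> 'k)" where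
  "fi_add \<alpha> \<beta> = (\<lambda>x y. \<alpha> x y + \<beta> x y)"

definition fi_smult :: "'k::field \<Rightarrow> ('a::order \<Rightarrow> 'a \<Rightarrow> 'k) \<Rightarrow> ('a \<Rightarrow> 'a \<Rightarrow> 'k)" where
  "fi_smult c \<alpha> = (\<lambda>x y. c * \<alpha> x y)"

text \<open>Convolution; for finitary series the sum has only finitely many nonzero terms,
  so we sum over the (finite) set of indices with nonzero terms.\<close>
definition fi_mult :: "('a::order \<Rightarrow> 'a \<Rightarrow> 'k::field) \<Rightarrow> ('a \<Rightarrow> 'a \<Rightarrow> 'k) \<Rightarrow> ('a \<Rightarrow> 'a \<Rightarrow> 'k)" where
  "fi_mult \<alpha> \<beta> = (\<lambda>x y. if x \<le> y then
      (\<Sum>z \<in> {z. x \<le> z \<and> z \<le> y \<and> \<alpha> x z * \<beta> z y \<noteq> 0}. \<alpha> x z * \<beta> z y) else 0)"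

definition fi_alg_iso ::
  "(('a::order \<Rightarrow> 'a \<Rightarrow> 'k::field) \<Rightarrow> ('b::order \<Rightarrow> 'b \<Rightarrow> 'k)) \<Rightarrow> bool" where
  "fi_alg_iso \<phi> \<longleftrightarrow>
     bij_betw \<phi> FI FI \<and>
     (\<forall>\<alpha>\<in>FI. \<forall>\<beta>\<in>FI. \<phi> (fi_add \<alpha> \<beta>) = fi_add (\<phi> \<alpha>) (\<phi> \<beta>)) \<and>
     (\<forall>c. \<forall>\<alpha>\<in>FI. \<phi> (fi_smult c \<alpha>) = fi_smult c (\<phi> \<alpha>)) \<and>
     (\<forall>\<alpha>\<in>FI. \<forall>\<beta>\<in>FI. \<phi> (fi_mult \<alpha> \<beta>) = fi_mult (\<phi> \<alpha>) (\<phi> \<beta>))"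

definition poset_iso :: "('a::order \<Rightarrow> 'b::order) \<Rightarrow> bool" where
  "poset_iso f \<longleftrightarrow> bij f \<and> (\<forall>x y. x \<le> y \<longleftrightarrow> f x \<le> f y)"

end

theory Submission
  imports Defs
begin

(* The poset P is recovered from the multiplicative semigroup (with zero) of FI(P)
   alone.  The diagonal matrix units e_x are primitive idempotents; every primitive
   idempotent is equivalent (e = a b, e' = b a) to some e_x, and to exactly one; and
   e_x A e_y is nonzero iff x <= y.  Since all of this is phrased through products and
   zero, it is invariant under multiplicative bijections preserving zero.

   It then shows that FI(P) is such a semigroup (convolution is closed and
   associative) and that the diagonal units encode P in it; the key analytic step is that
   every nonzero idempotent of FI(P) has a nonzero diagonal entry. *)

locale semigroup_with_zero =
  fixes A :: "'r set" and mult :: "'r \<Rightarrow> 'r \<Rightarrow> 'r" (infixl \<open>\<cdot>\<close> 70) and zero :: 'r (\<open>\<zero>\<close>)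
  assumes closed: "a \<in> A \<Longrightarrow> b \<in> A \<Longrightarrow> a \<cdot> b \<in> A"
    and assoc: "a \<in> A \<Longrightarrow> b \<in> A \<Longrightarrow> c \<in> A \<Longrightarrow> (a \<cdot> b) \<cdot> c = a \<cdot> (b \<cdot> c)"
    and zero_closed: "\<zero> \<in> A"
    and zero_left: "\<zero> \<cdot> a = \<zero>" and zero_right: "a \<cdot> \<zero> = \<zero>"
begin

definition primitive :: "'r \<Rightarrow> bool" where
  "primitive e \<longleftrightarrow> e \<in> A \<and> e \<cdot> e = e \<and> e \<noteq> \<zero> \<and>
     (\<forall>g\<in>A. g \<cdot> g = g \<and> e \<cdot> g = g \<and> g \<cdot> e = g \<longrightarrow> g = \<zero> \<or> g = e)"

definition idem_equiv :: "'r \<Rightarrow> 'r \<Rightarrow> bool" where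
  "idem_equiv e e' \<longleftrightarrow> (\<exists>a\<in>A. \<exists>b\<in>A.
     a \<cdot> b = e \<and> b \<cdot> a = e' \<and> e \<cdot> a = a \<and> a \<cdot> e' = a \<and> e' \<cdot> b = b \<and> b \<cdot> e = b)"

(* e is linked to e' if the corner e A e' is nonzero; on matrix units this is the order. *)
definition linked :: "'r \<Rightarrow> 'r \<Rightarrow> bool" where
  "linked e e' \<longleftrightarrow> (\<exists>c\<in>A. e \<cdot> c = c \<and> c \<cdot> e' = c \<and> c \<noteq> \<zero>)"

lemma idem_equiv_sym: "idem_equiv e e' \<Longrightarrow> idem_equiv e' e"
  unfolding idem_equiv_def by blast

lemma idem_equiv_closed: "idem_equiv e e' \<Longrightarrow> e \<in> A \<and> e' \<in> A"
  unfolding idem_equiv_def using closed by blast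

lemma idem_equiv_trans:
  assumes "idem_equiv e e'" "idem_equiv e' e''"
  shows "idem_equiv e e''"
proof -
  obtain a b where ab: "a \<in> A" "b \<in> A" "a \<cdot> b = e" "b \<cdot> a = e'"
    "e \<cdot> a = a" "a \<cdot> e' = a" "e' \<cdot> b = b" "b \<cdot> e = b"
    using assms(1) unfolding idem_equiv_def by blast
  obtain c d where cd: "c \<in> A" "d \<in> A" "c \<cdot> d = e'" "d \<cdot> c = e''"
    "e' \<cdot> c = c" "c \<cdot> e'' = c" "e'' \<cdot> d = d" "d \<cdot> e' = d"
    using assms(2) unfolding idem_equiv_def by blast
  have reassoc: "(a \<cdot> c) \<cdot> (d \<cdot> b) = a \<cdot> ((c \<cdot> d) \<cdot> b)" "(d \<cdot> b) \<cdot> (a \<cdot> c) = d \<cdot> ((b \<cdot> a) \<cdot> c)"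
    "e \<cdot> (a \<cdot> c) = (e \<cdot> a) \<cdot> c" "(a \<cdot> c) \<cdot> e'' = a \<cdot> (c \<cdot> e'')"
    "e'' \<cdot> (d \<cdot> b) = (e'' \<cdot> d) \<cdot> b" "(d \<cdot> b) \<cdot> e = d \<cdot> (b \<cdot> e)"
    using ab(1,2) cd(1,2) idem_equiv_closed[OF assms(1)] idem_equiv_closed[OF assms(2)]
    by (simp_all add: assoc closed)
  show ?thesis
    unfolding idem_equiv_def
    by (intro bexI[of _ "a \<cdot> c"] bexI[of _ "d \<cdot> b"]) (simp_all add: reassoc ab cd closed)
qed

(* If c in e A e' is nonzero, then b c a' in f A f' is nonzero: conjugating back gives c. *)
lemma linked_transfer:
  assumes "linked e e'" "idem_equiv e f" "idem_equiv e' f'"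
  shows "linked f f'"
proof -
  obtain c where c: "c \<in> A" "e \<cdot> c = c" "c \<cdot> e' = c" "c \<noteq> \<zero>"
    using assms(1) unfolding linked_def by blast
  obtain a b where ab: "a \<in> A" "b \<in> A" "a \<cdot> b = e" "b \<cdot> a = f"
    "e \<cdot> a = a" "a \<cdot> f = a" "f \<cdot> b = b" "b \<cdot> e = b"
    using assms(2) unfolding idem_equiv_def by blast
  obtain a' b' where ab': "a' \<in> A" "b' \<in> A" "a' \<cdot> b' = e'" "b' \<cdot> a' = f'"
    "e' \<cdot> a' = a'" "a' \<cdot> f' = a'" "f' \<cdot> b' = b'" "b' \<cdot> e' = b'"
    using assms(3) unfolding idem_equiv_def by blast
  note mem = ab(1,2) ab'(1,2) c(1)
  define c' where "c' = b \<cdot> c \<cdot> a'"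
  have "f \<cdot> c' = b \<cdot> ((a \<cdot> b) \<cdot> c) \<cdot> a'"
    unfolding c'_def ab(4)[symmetric] using mem by (simp add: assoc closed)
  then have left: "f \<cdot> c' = c'" unfolding c'_def using ab(3) c(2) by simp
  have "c' \<cdot> f' = b \<cdot> (c \<cdot> (a' \<cdot> b')) \<cdot> a'"
    unfolding c'_def ab'(4)[symmetric] using mem by (simp add: assoc closed)
  then have right: "c' \<cdot> f' = c'" unfolding c'_def using ab'(3) c(3) by simp
  have "a \<cdot> c' \<cdot> b' = (a \<cdot> b) \<cdot> c \<cdot> (a' \<cdot> b')"
    unfolding c'_def using mem by (simp add: assoc closed)
  then have "a \<cdot> c' \<cdot> b' = c"
    using ab(3) ab'(3) c(2,3) mem by (simp add: assoc closed)
  then have "c' \<noteq> \<zero>" using c(4) zero_left zero_right by auto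
  moreover have "c' \<in> A" unfolding c'_def using mem by (simp add: closed)
  ultimately show ?thesis unfolding linked_def using left right by blast
qed

lemma linked_idem_equiv_iff:
  assumes "idem_equiv e f" "idem_equiv e' f'"
  shows "linked e e' \<longleftrightarrow> linked f f'"
  using linked_transfer assms idem_equiv_sym by blast

lemma idem_equiv_linked: "idem_equiv e e' \<Longrightarrow> e \<noteq> \<zero> \<Longrightarrow> linked e e'"
  unfolding idem_equiv_def linked_def using zero_left by metis

(* Key criterion: a nonzero idempotent p with p e p = p is equivalent to a primitive e.
   Indeed e p e is a nonzero idempotent below e, hence equals e. *)
lemma primitive_idem_equiv:
  assumes "primitive e" and p: "p \<in> A" "p \<cdot> p = p" "p \<cdot> e \<cdot> p = p" "p \<noteq> \<zero>"
  shows "idem_equiv e p"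
proof -
  have e: "e \<in> A" "e \<cdot> e = e" using assms(1) unfolding primitive_def by auto
  define a where "a = e \<cdot> p"
  define b where "b = p \<cdot> e"
  have mem: "a \<in> A" "b \<in> A" unfolding a_def b_def using e p by (simp_all add: closed)
  have "b \<cdot> a = p \<cdot> (e \<cdot> e) \<cdot> p" unfolding a_def b_def using e(1) p(1) by (simp add: assoc closed)
  then have ba: "b \<cdot> a = p" using e(2) p(3) by simp
  have "e \<cdot> a = (e \<cdot> e) \<cdot> p" "a \<cdot> p = e \<cdot> (p \<cdot> p)" "p \<cdot> b = (p \<cdot> p) \<cdot> e" "b \<cdot> e = p \<cdot> (e \<cdot> e)"
    unfolding a_def b_def using e(1) p(1) by (simp_all add: assoc closed)
  then have absorb: "e \<cdot> a = a" "a \<cdot> p = a" "p \<cdot> b = b" "b \<cdot> e = b"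
    unfolding a_def b_def using e(2) p(2) by simp_all
  define g where "g = a \<cdot> b"
  have "g \<in> A" unfolding g_def using mem by (simp add: closed)
  moreover have "g \<cdot> g = g"
  proof -
    have "g \<cdot> g = a \<cdot> (b \<cdot> a) \<cdot> b" unfolding g_def using mem by (simp add: assoc closed)
    then show ?thesis unfolding g_def using ba absorb(2) by simp
  qed
  moreover have "e \<cdot> g = g" "g \<cdot> e = g"
    unfolding g_def using assoc[OF e(1) mem] assoc[OF mem e(1)] absorb(1,4) by simp_all
  moreover have "g \<noteq> \<zero>"
  proof
    have "b \<cdot> g \<cdot> a = (b \<cdot> a) \<cdot> (b \<cdot> a)" unfolding g_def using mem by (simp add: assoc closed)
    also have "\<dots> = p" using ba p(2) by simp
    finally show "g = \<zero> \<Longrightarrow> False" using p(4) zero_left zero_right by simp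
  qed
  ultimately have "g = e" using assms(1) unfolding primitive_def by blast
  then show ?thesis unfolding idem_equiv_def g_def using mem ba absorb by blast
qed

end

locale semigroup_with_zero_iso =
  A: semigroup_with_zero A mult zero + B: semigroup_with_zero B mult' zero'
  for A :: "'r set" and mult (infixl \<open>\<cdot>\<close> 70) and zero (\<open>\<zero>\<close>)
    and B :: "'s set" and mult' (infixl \<open>\<star>\<close> 70) and zero' +
  fixes h :: "'r \<Rightarrow> 's"
  assumes bij: "bij_betw h A B"
    and hom: "a \<in> A \<Longrightarrow> b \<in> A \<Longrightarrow> h (a \<cdot> b) = h a \<star> h b"
    and zero_preserved: "h \<zero> = zero'"
begin

lemma image_eq: "B = h ` A"
  using bij by (simp add: bij_betw_def)

lemma mem: "a \<in> A \<Longrightarrow> h a \<in> B"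
  using image_eq by blast

lemma ball_B: "(\<forall>b\<in>B. P b) \<longleftrightarrow> (\<forall>a\<in>A. P (h a))"
  and bex_B: "(\<exists>b\<in>B. P b) \<longleftrightarrow> (\<exists>a\<in>A. P (h a))"
  unfolding image_eq by blast+

lemma eq_iff: "a \<in> A \<Longrightarrow> b \<in> A \<Longrightarrow> h a = h b \<longleftrightarrow> a = b"
  using bij by (auto simp: bij_betw_def inj_on_def)

lemma zero_iff: "a \<in> A \<Longrightarrow> h a = zero' \<longleftrightarrow> a = \<zero>"
  using eq_iff[OF _ A.zero_closed] zero_preserved by simp

lemma hom_eq_iff: "a \<in> A \<Longrightarrow> b \<in> A \<Longrightarrow> c \<in> A \<Longrightarrow> h a \<star> h b = h c \<longleftrightarrow> a \<cdot> b = c"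
  using hom eq_iff A.closed by metis

lemma primitive_iff: "e \<in> A \<Longrightarrow> B.primitive (h e) \<longleftrightarrow> A.primitive e"
  unfolding A.primitive_def B.primitive_def ball_B
  by (simp add: mem hom_eq_iff zero_iff eq_iff)

lemma idem_equiv_iff: "e \<in> A \<Longrightarrow> e' \<in> A \<Longrightarrow> B.idem_equiv (h e) (h e') \<longleftrightarrow> A.idem_equiv e e'"
  unfolding A.idem_equiv_def B.idem_equiv_def bex_B
  by (simp add: hom_eq_iff)

lemma linked_iff: "e \<in> A \<Longrightarrow> e' \<in> A \<Longrightarrow> B.linked (h e) (h e') \<longleftrightarrow> A.linked e e'"
  unfolding A.linked_def B.linked_def bex_B
  by (simp add: hom_eq_iff zero_iff)

end

locale poset_of_idempotents = semigroup_with_zero A mult zero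
  for A :: "'r set" and mult (infixl \<open>\<cdot>\<close> 70) and zero (\<open>\<zero>\<close>) +
  fixes idem :: "'p::order \<Rightarrow> 'r"
  assumes idem_primitive: "primitive (idem x)"
    and primitive_equiv_idem: "primitive e \<Longrightarrow> \<exists>x. idem_equiv e (idem x)"
    and linked_idem_iff: "linked (idem x) (idem y) \<longleftrightarrow> x \<le> y"
begin

lemma idem_mem: "idem x \<in> A"
  using idem_primitive unfolding primitive_def by blast

(* Distinct indices give inequivalent idempotents, by antisymmetry of the order. *)
lemma idem_equiv_idem: "idem_equiv (idem x) (idem y) \<Longrightarrow> x = y"
  using idem_equiv_linked idem_equiv_sym idem_primitive linked_idem_iff
  unfolding primitive_def by (metis order.antisym)

end

lemma order_embedding_surj_poset_iso:
  fixes f :: "'a::order \<Rightarrow> 'b::order"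
  assumes "\<And>x y. x \<le> y \<longleftrightarrow> f x \<le> f y" and "surj f"
  shows "poset_iso f"
proof -
  have "inj f" using assms(1) by (intro injI) (metis order.antisym order.refl)
  then show ?thesis using assms unfolding poset_iso_def bij_def by blast
qed

(* The poset is determined by the semigroup with zero: send x to the index of the class
   containing the image of the idempotent indexed by x. *)
theorem (in semigroup_with_zero_iso) poset_iso_of_idempotents:
  fixes \<delta> :: "'p::order \<Rightarrow> 'r" and \<delta>' :: "'q::order \<Rightarrow> 's"
  assumes "poset_of_idempotents A (\<cdot>) \<zero> \<delta>" and "poset_of_idempotents B (\<star>) zero' \<delta>'"
  shows "\<exists>f :: 'p \<Rightarrow> 'q. poset_iso f"
proof -
  interpret P: poset_of_idempotents A "(\<cdot>)" \<zero> \<delta> by (rule assms(1))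
  interpret Q: poset_of_idempotents B "(\<star>)" zero' \<delta>' by (rule assms(2))
  have "\<forall>x. \<exists>y. B.idem_equiv (h (\<delta> x)) (\<delta>' y)"
    using Q.primitive_equiv_idem primitive_iff P.idem_mem P.idem_primitive by blast
  then obtain f where f: "\<And>x. B.idem_equiv (h (\<delta> x)) (\<delta>' (f x))" by metis
  have "x \<le> y \<longleftrightarrow> f x \<le> f y" for x y
  proof -
    have "x \<le> y \<longleftrightarrow> B.linked (h (\<delta> x)) (h (\<delta> y))"
      using linked_iff P.linked_idem_iff P.idem_mem by simp
    also have "\<dots> \<longleftrightarrow> B.linked (\<delta>' (f x)) (\<delta>' (f y))"
      by (rule B.linked_idem_equiv_iff[OF f f])
    finally show ?thesis using Q.linked_idem_iff by simp
  qed
  moreover have "y \<in> range f" for y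
  proof -
    obtain \<alpha> where \<alpha>: "\<alpha> \<in> A" "h \<alpha> = \<delta>' y" using image_eq Q.idem_mem by (metis imageE)
    then have "A.primitive \<alpha>" using primitive_iff Q.idem_primitive by metis
    then obtain x where "A.idem_equiv \<alpha> (\<delta> x)" using P.primitive_equiv_idem by blast
    then have "B.idem_equiv (\<delta>' y) (h (\<delta> x))" using idem_equiv_iff \<alpha> P.idem_mem by metis
    then have "B.idem_equiv (\<delta>' y) (\<delta>' (f x))" using B.idem_equiv_trans f by blast
    then show ?thesis using Q.idem_equiv_idem by blast
  qed
  ultimately show ?thesis using order_embedding_surj_poset_iso by blast
qed

definition triangular :: "('a::order \<Rightarrow> 'a \<Rightarrow> 'k::field) \<Rightarrow> bool" where
  "triangular \<alpha> \<longleftrightarrow> (\<forall>x y. \<not> x \<le> y \<longrightarrow> \<alpha> x y = 0)"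

lemma triangularD: "triangular \<alpha> \<Longrightarrow> \<alpha> x y \<noteq> 0 \<Longrightarrow> x \<le> y"
  unfolding triangular_def by blast

lemma FI_triangular: "\<alpha> \<in> FI \<Longrightarrow> triangular \<alpha>"
  by (simp add: FI_def triangular_def)

lemma FI_iff: "\<alpha> \<in> FI \<longleftrightarrow> triangular \<alpha> \<and> finitary \<alpha>"
  by (simp add: FI_def triangular_def)

lemma FI_interval_finite:
  assumes "\<alpha> \<in> FI"
  shows "finite {(u, v). x \<le> u \<and> u < v \<and> v \<le> y \<and> \<alpha> u v \<noteq> 0}"
proof (cases "x < y")
  case True
  then show ?thesis using assms unfolding FI_def finitary_def by blast
next
  case False
  then have "{(u, v). x \<le> u \<and> u < v \<and> v \<le> y \<and> \<alpha> u v \<noteq> 0} = {}"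
    using le_less_trans less_le_trans by blast
  then show ?thesis by (metis finite.emptyI)
qed

lemma FI_row_finite:
  assumes "\<alpha> \<in> FI"
  shows "finite {z. \<alpha> x z \<noteq> 0 \<and> z \<le> y}"
proof -
  have "{z. \<alpha> x z \<noteq> 0 \<and> z \<le> y}
      \<subseteq> insert x (snd ` {(u, v). x \<le> u \<and> u < v \<and> v \<le> y \<and> \<alpha> u v \<noteq> 0})"
    using triangularD[OF FI_triangular[OF assms]] by (force simp: order.strict_iff_order)
  then show ?thesis using FI_interval_finite[OF assms] finite_subset by blast
qed

lemma FI_column_finite:
  assumes "\<alpha> \<in> FI"
  shows "finite {w. \<alpha> w y \<noteq> 0 \<and> x \<le> w}"
proof -
  have "{w. \<alpha> w y \<noteq> 0 \<and> x \<le> w}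
      \<subseteq> insert y (fst ` {(u, v). x \<le> u \<and> u < v \<and> v \<le> y \<and> \<alpha> u v \<noteq> 0})"
    using triangularD[OF FI_triangular[OF assms]] by (force simp: order.strict_iff_order)
  then show ?thesis using FI_interval_finite[OF assms] finite_subset by blast
qed

lemma fi_mult_triangular: "triangular (fi_mult \<alpha> \<beta>)"
  by (simp add: triangular_def fi_mult_def)

lemma fi_mult_as_sum:
  assumes "triangular \<alpha>" "triangular \<beta>" and "finite F"
    and "{z. \<alpha> x z * \<beta> z w \<noteq> 0} \<subseteq> F"
  shows "fi_mult \<alpha> \<beta> x w = (\<Sum>z\<in>F. \<alpha> x z * \<beta> z w)"
proof -
  have nz: "x \<le> z \<and> z \<le> w" if "\<alpha> x z * \<beta> z w \<noteq> 0" for z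
    using that triangularD[OF assms(1), of x z] triangularD[OF assms(2), of z w] by auto
  show ?thesis
  proof (cases "x \<le> w")
    case True
    have "(\<Sum>z \<in> {z. x \<le> z \<and> z \<le> w \<and> \<alpha> x z * \<beta> z w \<noteq> 0}. \<alpha> x z * \<beta> z w)
        = (\<Sum>z\<in>F. \<alpha> x z * \<beta> z w)"
      by (rule sum.mono_neutral_left[OF assms(3)]) (use assms(4) nz in auto)
    then show ?thesis using True by (simp add: fi_mult_def)
  next
    case False
    then have "\<forall>z\<in>F. \<alpha> x z * \<beta> z w = 0" using nz order.trans by blast
    then show ?thesis using False by (simp add: fi_mult_def sum.neutral)
  qed
qed

lemma fi_mult_nonzero_witness:
  assumes "fi_mult \<alpha> \<beta> u v \<noteq> 0"
  obtains z where "u \<le> z" "z \<le> v" "\<alpha> u z \<noteq> 0" "\<beta> z v \<noteq> 0"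
  using assms unfolding fi_mult_def
  by (auto split: if_splits elim: sum.not_neutral_contains_not_neutral)

(* A nonzero entry of a product comes from an entry of a factor or a pair of entries
   meeting at an intermediate point, so the product is again finitary. *)
lemma fi_mult_closed:
  assumes "\<alpha> \<in> FI" "\<beta> \<in> FI"
  shows "fi_mult \<alpha> \<beta> \<in> FI"
proof -
  have "finite {(u, v). x \<le> u \<and> u < v \<and> v \<le> y \<and> fi_mult \<alpha> \<beta> u v \<noteq> 0}" for x y
  proof -
    define Sa where "Sa = {(u, v). x \<le> u \<and> u < v \<and> v \<le> y \<and> \<alpha> u v \<noteq> 0}"
    define Sb where "Sb = {(u, v). x \<le> u \<and> u < v \<and> v \<le> y \<and> \<beta> u v \<noteq> 0}"
    let ?compose = "\<lambda>(p :: 'a \<times> 'a, q :: 'a \<times> 'a). (fst p, snd q)"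
    have "{(u, v). x \<le> u \<and> u < v \<and> v \<le> y \<and> fi_mult \<alpha> \<beta> u v \<noteq> 0}
        \<subseteq> Sa \<union> Sb \<union> ?compose ` (Sa \<times> Sb)"
    proof
      fix p assume "p \<in> {(u, v). x \<le> u \<and> u < v \<and> v \<le> y \<and> fi_mult \<alpha> \<beta> u v \<noteq> 0}"
      then obtain u v where p: "p = (u, v)"
        and uv: "x \<le> u" "u < v" "v \<le> y" "fi_mult \<alpha> \<beta> u v \<noteq> 0" by blast
      obtain z where z: "u \<le> z" "z \<le> v" "\<alpha> u z \<noteq> 0" "\<beta> z v \<noteq> 0"
        using uv(4) by (rule fi_mult_nonzero_witness)
      consider "z = u" | "z = v" | "u < z" "z < v" using z(1,2) by fastforce
      then show "p \<in> Sa \<union> Sb \<union> ?compose ` (Sa \<times> Sb)"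
      proof cases
        case 3
        then have "((u, z), (z, v)) \<in> Sa \<times> Sb"
          using uv z unfolding Sa_def Sb_def by (auto intro: order.trans)
        then show ?thesis unfolding p by (auto intro: rev_image_eqI)
      qed (use p uv z in \<open>auto simp: Sa_def Sb_def\<close>)
    qed
    moreover have "finite Sa" "finite Sb"
      unfolding Sa_def Sb_def using assms by (auto intro: FI_interval_finite)
    ultimately show ?thesis by (auto intro: finite_subset)
  qed
  then show ?thesis unfolding FI_iff finitary_def using fi_mult_triangular by blast
qed

(* Uniform finite index sets for convolution at all points of an interval; these let the
   two iterated sums in associativity be exchanged. *)
lemma fi_mult_row_sum:
  assumes "\<alpha> \<in> FI" "triangular \<beta>" "w \<le> y"
  shows "fi_mult \<alpha> \<beta> x w = (\<Sum>z\<in>{z. \<alpha> x z \<noteq> 0 \<and> z \<le> y}. \<alpha> x z * \<beta> z w)"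
  by (rule fi_mult_as_sum[OF FI_triangular[OF assms(1)] assms(2) FI_row_finite[OF assms(1)]])
    (use triangularD[OF assms(2)] assms(3) order.trans in fastforce)

lemma fi_mult_column_sum:
  assumes "triangular \<alpha>" "\<gamma> \<in> FI" "x \<le> z"
  shows "fi_mult \<alpha> \<gamma> z y = (\<Sum>w\<in>{w. \<gamma> w y \<noteq> 0 \<and> x \<le> w}. \<alpha> z w * \<gamma> w y)"
  by (rule fi_mult_as_sum[OF assms(1) FI_triangular[OF assms(2)] FI_column_finite[OF assms(2)]])
    (use triangularD[OF assms(1)] assms(3) order.trans in fastforce)

lemma fi_mult_assoc:
  assumes "\<alpha> \<in> FI" "\<beta> \<in> FI" "\<gamma> \<in> FI"
  shows "fi_mult (fi_mult \<alpha> \<beta>) \<gamma> = fi_mult \<alpha> (fi_mult \<beta> \<gamma>)"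
proof (intro ext)
  fix x y
  let ?Z = "{z. \<alpha> x z \<noteq> 0 \<and> z \<le> y}" and ?W = "{w. \<gamma> w y \<noteq> 0 \<and> x \<le> w}"
  note tri = FI_triangular[OF assms(2)] FI_triangular[OF assms(3)]
  have "fi_mult (fi_mult \<alpha> \<beta>) \<gamma> x y = (\<Sum>w\<in>?W. fi_mult \<alpha> \<beta> x w * \<gamma> w y)"
    by (rule fi_mult_column_sum[OF fi_mult_triangular assms(3) order.refl])
  also have "\<dots> = (\<Sum>w\<in>?W. \<Sum>z\<in>?Z. \<alpha> x z * \<beta> z w * \<gamma> w y)"
  proof (rule sum.cong[OF refl])
    fix w assume "w \<in> ?W"
    then have "w \<le> y" using triangularD[OF tri(2)] by blast
    then show "fi_mult \<alpha> \<beta> x w * \<gamma> w y = (\<Sum>z\<in>?Z. \<alpha> x z * \<beta> z w * \<gamma> w y)"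
      by (simp add: fi_mult_row_sum[OF assms(1) tri(1)] sum_distrib_right)
  qed
  also have "\<dots> = (\<Sum>z\<in>?Z. \<Sum>w\<in>?W. \<alpha> x z * \<beta> z w * \<gamma> w y)"
    by (rule sum.swap)
  also have "\<dots> = (\<Sum>z\<in>?Z. \<alpha> x z * fi_mult \<beta> \<gamma> z y)"
  proof (rule sum.cong[OF refl])
    fix z assume "z \<in> ?Z"
    then have "x \<le> z" using triangularD[OF FI_triangular[OF assms(1)]] by blast
    then show "(\<Sum>w\<in>?W. \<alpha> x z * \<beta> z w * \<gamma> w y) = \<alpha> x z * fi_mult \<beta> \<gamma> z y"
      by (simp add: fi_mult_column_sum[OF tri(1) assms(3)] sum_distrib_left mult.assoc)
  qed
  also have "\<dots> = fi_mult \<alpha> (fi_mult \<beta> \<gamma>) x y"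
    by (rule fi_mult_row_sum[OF assms(1) fi_mult_triangular order.refl, symmetric])
  finally show "fi_mult (fi_mult \<alpha> \<beta>) \<gamma> x y = fi_mult \<alpha> (fi_mult \<beta> \<gamma>) x y" .
qed

lemma FI_zero: "(\<lambda>_ _. 0) \<in> FI"
  by (simp add: FI_def finitary_def)

lemma fi_mult_zero_left: "fi_mult (\<lambda>_ _. 0) \<alpha> = (\<lambda>_ _. 0)"
  and fi_mult_zero_right: "fi_mult \<alpha> (\<lambda>_ _. 0) = (\<lambda>_ _. 0)"
  by (simp_all add: fi_mult_def fun_eq_iff)

lemma semigroup_with_zero_FI:
  "semigroup_with_zero (FI :: ('a::order \<Rightarrow> 'a \<Rightarrow> 'k::field) set) fi_mult (\<lambda>_ _. 0)"
  by unfold_locales (simp_all add: fi_mult_closed fi_mult_assoc FI_zero fi_mult_zero_left fi_mult_zero_right)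

interpretation fi: semigroup_with_zero "FI :: ('a::order \<Rightarrow> 'a \<Rightarrow> 'k::field) set" fi_mult "\<lambda>_ _. 0"
  by (rule semigroup_with_zero_FI)

definition fi_unit :: "'a::order \<Rightarrow> 'a \<Rightarrow> 'a \<Rightarrow> 'a \<Rightarrow> 'k::field" where
  "fi_unit x y = (\<lambda>u v. if u = x \<and> v = y then 1 else 0)"

lemma fi_unit_FI: "x \<le> y \<Longrightarrow> fi_unit x y \<in> FI"
  unfolding FI_def finitary_def fi_unit_def
  by (auto intro: finite_subset[where B = "{(x, y)}"])

lemma fi_unit_nonzero: "fi_unit x y \<noteq> (\<lambda>_ _. 0)"
  unfolding fi_unit_def by (metis one_neq_zero)

lemma fi_unit_left:
  assumes "triangular \<alpha>"
  shows "fi_mult (fi_unit x x) \<alpha> = (\<lambda>u v. if u = x then \<alpha> x v else 0)"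
proof (intro ext)
  fix u v
  have "fi_mult (fi_unit x x) \<alpha> u v = (\<Sum>z\<in>{x}. fi_unit x x u z * \<alpha> z v)"
    by (rule fi_mult_as_sum) (use assms in \<open>auto simp: fi_unit_def triangular_def\<close>)
  then show "fi_mult (fi_unit x x) \<alpha> u v = (if u = x then \<alpha> x v else 0)"
    by (simp add: fi_unit_def)
qed

lemma fi_unit_right:
  assumes "triangular \<alpha>"
  shows "fi_mult \<alpha> (fi_unit y y) = (\<lambda>u v. if v = y then \<alpha> u y else 0)"
proof (intro ext)
  fix u v
  have "fi_mult \<alpha> (fi_unit y y) u v = (\<Sum>z\<in>{y}. \<alpha> u z * fi_unit y y z v)"
    by (rule fi_mult_as_sum) (use assms in \<open>auto simp: fi_unit_def triangular_def\<close>)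
  then show "fi_mult \<alpha> (fi_unit y y) u v = (if v = y then \<alpha> u y else 0)"
    by (simp add: fi_unit_def)
qed

lemma fi_unit_corner:
  assumes "triangular \<alpha>"
  shows "fi_mult (fi_mult (fi_unit x x) \<alpha>) (fi_unit y y) = (\<lambda>u v. \<alpha> x y * fi_unit x y u v)"
  unfolding fi_unit_right[OF fi_mult_triangular] unfolding fi_unit_left[OF assms]
  by (simp add: fi_unit_def fun_eq_iff)

lemma fi_unit_idem: "fi_mult (fi_unit x x) (fi_unit x x) = fi_unit x x"
  unfolding fi_unit_left[OF FI_triangular[OF fi_unit_FI[OF order.refl]]]
  by (simp add: fi_unit_def fun_eq_iff)

lemma fi_mult_diagonal:
  assumes "triangular \<alpha>" "triangular \<beta>"
  shows "fi_mult \<alpha> \<beta> x x = \<alpha> x x * \<beta> x x"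
proof -
  have "fi_mult \<alpha> \<beta> x x = (\<Sum>z\<in>{x}. \<alpha> x z * \<beta> z x)"
    by (rule fi_mult_as_sum[OF assms])
      (auto dest: triangularD[OF assms(1)] triangularD[OF assms(2)] intro: order.antisym)
  then show ?thesis by simp
qed

(* An idempotent absorbed by e_x on both sides is a scalar multiple of e_x, and the
   scalar is an idempotent of the field, so e_x is primitive. *)
lemma fi_unit_primitive: "fi.primitive (fi_unit x x)"
  unfolding fi.primitive_def
proof (intro conjI ballI impI)
  fix g assume g: "g \<in> FI" and absorbs: "fi_mult g g = g \<and> fi_mult (fi_unit x x) g = g \<and> fi_mult g (fi_unit x x) = g"
  then have "g = (\<lambda>u v. g x x * fi_unit x x u v)"
    using fi_unit_corner[OF FI_triangular[OF g], of x x] by simp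
  moreover have "g x x * g x x = g x x"
    using absorbs fi_mult_diagonal[OF FI_triangular[OF g] FI_triangular[OF g], of x] by simp
  then have "g x x = 0 \<or> g x x = 1" by auto
  ultimately show "g = (\<lambda>_ _. 0) \<or> g = fi_unit x x" by auto
qed (simp_all add: fi_unit_FI fi_unit_idem fi_unit_nonzero)

(* Otherwise choose in a row x a
   minimal column v of a nonzero entry within a bounded interval: every product term of
   the entry at (x, v) of the square then involves a diagonal entry, so it vanishes. *)
lemma FI_idempotent_has_diagonal_entry:
  assumes \<epsilon>: "\<epsilon> \<in> FI" and idem: "fi_mult \<epsilon> \<epsilon> = \<epsilon>" and nonzero: "\<epsilon> \<noteq> (\<lambda>_ _. 0)"
  shows "\<exists>x. \<epsilon> x x \<noteq> 0"
proof (rule ccontr)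
  assume "\<not> (\<exists>x. \<epsilon> x x \<noteq> 0)"
  then have diagonal: "\<And>x. \<epsilon> x x = 0" by blast
  obtain x y where "\<epsilon> x y \<noteq> 0" using nonzero by (meson ext)
  then obtain v where v: "v \<in> {z. \<epsilon> x z \<noteq> 0 \<and> z \<le> y}"
    and minimal: "\<And>z. z \<in> {z. \<epsilon> x z \<noteq> 0 \<and> z \<le> y} \<Longrightarrow> z \<le> v \<Longrightarrow> v = z"
    using finite_has_minimal[OF FI_row_finite[OF \<epsilon>, of x y]] by blast
  have "\<epsilon> x v = fi_mult \<epsilon> \<epsilon> x v" using idem by simp
  also have "\<dots> = (\<Sum>z\<in>{z. \<epsilon> x z \<noteq> 0 \<and> z \<le> y}. \<epsilon> x z * \<epsilon> z v)"
    using fi_mult_row_sum[OF \<epsilon> FI_triangular[OF \<epsilon>]] v by blast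
  also have "\<dots> = 0"
  proof (rule sum.neutral, intro ballI)
    fix z assume z: "z \<in> {z. \<epsilon> x z \<noteq> 0 \<and> z \<le> y}"
    show "\<epsilon> x z * \<epsilon> z v = 0"
    proof (cases "\<epsilon> z v = 0")
      case False
      then have "z = v" using minimal[OF z] triangularD[OF FI_triangular[OF \<epsilon>]] by metis
      then show ?thesis using diagonal by simp
    qed simp
  qed
  finally show False using v by simp
qed

(* Every primitive idempotent is equivalent to a diagonal unit: if epsilon x x is nonzero
   then it is 1 and e_x epsilon e_x = e_x. *)
lemma FI_primitive_equiv_unit:
  assumes "fi.primitive \<epsilon>"
  shows "\<exists>x. fi.idem_equiv \<epsilon> (fi_unit x x)"
proof -
  have \<epsilon>: "\<epsilon> \<in> FI" "fi_mult \<epsilon> \<epsilon> = \<epsilon>" "\<epsilon> \<noteq> (\<lambda>_ _. 0)"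
    using assms unfolding fi.primitive_def by auto
  obtain x where x: "\<epsilon> x x \<noteq> 0" using FI_idempotent_has_diagonal_entry[OF \<epsilon>] by blast
  have "\<epsilon> x x * \<epsilon> x x = \<epsilon> x x"
    using \<epsilon>(2) fi_mult_diagonal[OF FI_triangular[OF \<epsilon>(1)] FI_triangular[OF \<epsilon>(1)], of x] by simp
  then have "\<epsilon> x x = 1" using x by simp
  then have "fi_mult (fi_mult (fi_unit x x) \<epsilon>) (fi_unit x x) = fi_unit x x"
    by (simp add: fi_unit_corner[OF FI_triangular[OF \<epsilon>(1)]])
  then show ?thesis
    using fi.primitive_idem_equiv[OF assms fi_unit_FI[OF order.refl] fi_unit_idem _ fi_unit_nonzero]
    by blast
qed

(* e_x A e_y is nonzero exactly when x <= y, witnessed by the unit at (x, y). *)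
lemma FI_linked_unit_iff:
  "fi.linked (fi_unit x x :: 'a::order \<Rightarrow> 'a \<Rightarrow> 'k::field) (fi_unit y y) \<longleftrightarrow> x \<le> y"
  (is "?linked \<longleftrightarrow> _")
proof
  assume ?linked
  then obtain \<gamma> :: "'a \<Rightarrow> 'a \<Rightarrow> 'k" where \<gamma>: "\<gamma> \<in> FI" "fi_mult (fi_unit x x) \<gamma> = \<gamma>" "fi_mult \<gamma> (fi_unit y y) = \<gamma>"
    "\<gamma> \<noteq> (\<lambda>_ _. 0)"
    unfolding fi.linked_def by blast
  then have "\<gamma> = (\<lambda>u v. \<gamma> x y * fi_unit x y u v)"
    using fi_unit_corner[OF FI_triangular[OF \<gamma>(1)], of x y] by simp
  then have "\<gamma> x y \<noteq> 0" using \<gamma>(4) by auto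
  then show "x \<le> y" using triangularD[OF FI_triangular[OF \<gamma>(1)]] by blast
next
  assume "x \<le> y"
  then have "fi_mult (fi_unit x x) (fi_unit x y) = fi_unit x y"
    "fi_mult (fi_unit x y) (fi_unit y y) = fi_unit x y"
    by (simp_all add: fi_unit_left fi_unit_right FI_triangular fi_unit_FI)
      (simp_all add: fi_unit_def fun_eq_iff)
  then show ?linked
    unfolding fi.linked_def using fi_unit_FI[OF \<open>x \<le> y\<close>] fi_unit_nonzero by blast
qed

lemma FI_poset_of_idempotents:
  "poset_of_idempotents (FI :: ('a::order \<Rightarrow> 'a \<Rightarrow> 'k::field) set) fi_mult (\<lambda>_ _. 0)
     (\<lambda>x. fi_unit x x)"
  by unfold_locales (simp_all add: fi_unit_primitive FI_primitive_equiv_unit FI_linked_unit_iff)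

(* An algebra isomorphism preserves multiplication and, by linearity, zero. *)
lemma fi_alg_iso_semigroup_iso:
  fixes \<phi> :: "('a::order \<Rightarrow> 'a \<Rightarrow> 'k::field) \<Rightarrow> ('b::order \<Rightarrow> 'b \<Rightarrow> 'k)"
  assumes "fi_alg_iso \<phi>"
  shows "semigroup_with_zero_iso FI fi_mult (\<lambda>_ _. 0) FI fi_mult (\<lambda>_ _. 0) \<phi>"
proof -
  have "\<phi> (fi_smult 0 (\<lambda>_ _. 0)) = fi_smult 0 (\<phi> (\<lambda>_ _. 0))"
    using assms FI_zero unfolding fi_alg_iso_def by blast
  then have "\<phi> (\<lambda>_ _. 0) = (\<lambda>_ _. 0)" by (simp add: fi_smult_def)
  then show ?thesis
    using assms unfolding fi_alg_iso_def
    by (intro semigroup_with_zero_iso.intro semigroup_with_zero_iso_axioms.intro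
        semigroup_with_zero_FI) auto
qed

theorem theorem5:
  fixes \<phi> :: "('a::order \<Rightarrow> 'a \<Rightarrow> 'k::field) \<Rightarrow> ('b::order \<Rightarrow> 'b \<Rightarrow> 'k)"
  assumes "fi_alg_iso \<phi>"
  shows "\<exists>f :: 'a \<Rightarrow> 'b. poset_iso f"
proof -
  have "semigroup_with_zero_iso FI fi_mult (\<lambda>_ _. 0) FI fi_mult (\<lambda>_ _. 0) \<phi>"
    using assms by (rule fi_alg_iso_semigroup_iso)
  then show ?thesis
    using FI_poset_of_idempotents FI_poset_of_idempotents
    by (rule semigroup_with_zero_iso.poset_iso_of_idempotents)
qed

end
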